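(* Let $I$ be an instance of 2-SCSS-$(k,1)$ given by a directed graph $G=(V,E)$ with edge weights $\omega:E\to\mathbb{R}^{\geq 0}$ and terminals $s,t$, and let $I'$ be the Token Game constructed from $I$ as described in the context. Then $\mathrm{OPT}(I)\geq \mathrm{OPT}(I')$.
   Context: 2-SCSS-$(k,1)$: find $k$ paths $F_1,\dots,F_k$ from $s$ to $t$ and one path $B$ from $t$ to $s$ minimizing $\sum_{e\in E}\omega(e)\max\{|\{i: e\in F_i\}|,\ [e\in B]\}$; $\mathrm{OPT}(I)$ is this minimum. The Token Game $I'$: tokens $\mathbf{b},\mathbf{f}_1,\dots,\mathbf{f}_k$; states are vectors $\bar v=(v_0,v_1,\dots,v_k)\in V^{k+1}$ ($v_0$ the location of $\mathbf{b}$, $v_i$ that of $\mathbf{f}_i$); start state $(s,\dots,s)$, end state $(t,\dots,t)$. From each state $\bar v$ the moves are: (Backward) for each edge $(w,v_0)\in E$, move to the state obtained by replacing $v_0$ by $w$, at cost $\omega(w,v_0)$; (Forward) for each $i\in[k]$ and each edge $(v_i,x)\in E$, move to the state obtained by replacing $v_i$ by $x$, at cost $\omega(v_i,x)$; (Flip) for each $i\in[k]$, move to the state obtained by swapping $v_0$ and $v_i$ (new coordinate $0$ is $v_i$, new coordinate $i$ is $v_0$, others unchanged), at cost equal to the weight of a shortest $v_i\leadsto v_0$ path in $G$. $\mathrm{OPT}(I')$ is the minimum total cost of a sequence of moves from the start state to the end state. *)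

theory Defs
  imports Main "HOL-Library.Extended_Real"
begin

definition is_path :: "('a \<times> 'a) set \<Rightarrow> 'a list \<Rightarrow> 'a \<Rightarrow> 'a \<Rightarrow> bool" where
  "is_path E p u v \<longleftrightarrow> p \<noteq> [] \<and> hd p = u \<and> last p = v \<and> distinct p \<and>
     (\<forall>j. Suc j < length p \<longrightarrow> (p ! j, p ! Suc j) \<in> E)"

definition path_edges :: "'a list \<Rightarrow> ('a \<times> 'a) set" where
  "path_edges p = {(p ! j, p ! Suc j) | j. Suc j < length p}"

definition path_weight :: "('a \<times> 'a \<Rightarrow> real) \<Rightarrow> 'a list \<Rightarrow> real" where
  "path_weight w p = (\<Sum>j<length p - 1. w (p ! j, p ! Suc j))"

text \<open>Weight of a shortest u-to-v path (infinity if none exists).\<close>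
definition sp_dist :: "('a \<times> 'a) set \<Rightarrow> ('a \<times> 'a \<Rightarrow> real) \<Rightarrow> 'a \<Rightarrow> 'a \<Rightarrow> ereal" where
  "sp_dist E w u v = (INF p \<in> {p. is_path E p u v}. ereal (path_weight w p))"

definition scss_feasible :: "('a \<times> 'a) set \<Rightarrow> nat \<Rightarrow> 'a \<Rightarrow> 'a \<Rightarrow> (nat \<Rightarrow> 'a list) \<Rightarrow> 'a list \<Rightarrow> bool" where
  "scss_feasible E k s t F B \<longleftrightarrow> (\<forall>i\<in>{1..k}. is_path E (F i) s t) \<and> is_path E B t s"

definition scss_cost :: "('a \<times> 'a) set \<Rightarrow> ('a \<times> 'a \<Rightarrow> real) \<Rightarrow> nat \<Rightarrow> (nat \<Rightarrow> 'a list) \<Rightarrow> 'a list \<Rightarrow> real" where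
  "scss_cost E w k F B = (\<Sum>e\<in>E. w e * real (max (card {i\<in>{1..k}. e \<in> path_edges (F i)})
                                            (if e \<in> path_edges B then 1 else 0)))"

definition OPT_scss :: "'a set \<Rightarrow> ('a \<times> 'a) set \<Rightarrow> ('a \<times> 'a \<Rightarrow> real) \<Rightarrow> nat \<Rightarrow> 'a \<Rightarrow> 'a \<Rightarrow> ereal" where
  "OPT_scss V E w k s t =
     (INF FB \<in> {(F, B). scss_feasible E k s t F B}. ereal (scss_cost E w k (fst FB) (snd FB)))"

text \<open>Token game. A state is a list of length k+1: entry 0 is the position of token b,
 entry i (1 \<le> i \<le> k) the position of token f_i. A single move from state x to y with cost c:\<close>
inductive token_move :: "('a \<times> 'a) set \<Rightarrow> ('a \<times> 'a \<Rightarrow> real) \<Rightarrow> nat \<Rightarrow> 'a list \<Rightarrow> 'a list \<Rightarrow> ereal \<Rightarrow> bool"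
  for E w k where
  backward: "(u, x ! 0) \<in> E \<Longrightarrow> token_move E w k x (x[0 := u]) (ereal (w (u, x ! 0)))"
| forward: "i \<in> {1..k} \<Longrightarrow> (x ! i, y) \<in> E \<Longrightarrow> token_move E w k x (x[i := y]) (ereal (w (x ! i, y)))"
| flip: "i \<in> {1..k} \<Longrightarrow> token_move E w k x (x[0 := x ! i, i := x ! 0]) (sp_dist E w (x ! i) (x ! 0))"

inductive token_reach :: "('a \<times> 'a) set \<Rightarrow> ('a \<times> 'a \<Rightarrow> real) \<Rightarrow> nat \<Rightarrow> 'a list \<Rightarrow> 'a list \<Rightarrow> ereal \<Rightarrow> bool"
  for E w k where
  refl: "token_reach E w k x x 0"
| step: "token_move E w k x y c \<Longrightarrow> token_reach E w k y z d \<Longrightarrow> token_reach E w k x z (c + d)"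

definition OPT_token :: "'a set \<Rightarrow> ('a \<times> 'a) set \<Rightarrow> ('a \<times> 'a \<Rightarrow> real) \<Rightarrow> nat \<Rightarrow> 'a \<Rightarrow> 'a \<Rightarrow> ereal" where
  "OPT_token V E w k s t =
     (INF c \<in> {c. token_reach E w k (replicate (Suc k) s) (replicate (Suc k) t) c}. c)"

end

theory Submission
  imports Defs
begin

text \<open>Let the tokens walk along a solution \<open>(F\<^sub>1, \<dots>, F\<^sub>k, B)\<close>: each \<open>f\<^sub>i\<close> forwards along
  \<open>F\<^sub>i\<close> and \<open>b\<close> backwards along \<open>B\<close>, with the 2-SCSS cost of the parts not yet walked as a
  potential that pays for every move. If \<open>b\<close> is at \<open>t\<close>, some \<open>f\<^sub>i\<close> advances by one edge. Otherwise
  let \<open>(u, x)\<close> be the last edge of \<open>B\<close>, with \<open>b\<close> at \<open>x\<close>. If no \<open>F\<^sub>i\<close> uses it, \<open>b\<close> moves back to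
  \<open>u\<close>, and the potential drops by \<open>\<omega>(u, x)\<close>. If \<open>F\<^sub>j\<close> uses it, let \<open>v\<close> be the first vertex of \<open>B\<close>
  on the prefix of \<open>F\<^sub>j\<close> ending in \<open>x\<close>: \<open>f\<^sub>j\<close> advances to \<open>v\<close> and flips with \<open>b\<close>, at a cost of at
  most the weight of that prefix. Since \<open>B\<close> up to \<open>v\<close> shares no edge with the prefix, cutting the
  prefix from \<open>F\<^sub>j\<close> and truncating \<open>B\<close> at \<open>v\<close> lowers the potential by at least this weight.\<close>

lemma path_edges_eq_set_zip: "path_edges p = set (zip p (tl p))"
  unfolding path_edges_def set_zip by (auto simp: nth_tl)

lemma path_edges_Nil [simp]: "path_edges [] = {}"
  and path_edges_singleton [simp]: "path_edges [a] = {}"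
  and path_edges_Cons_Cons [simp]: "path_edges (a # b # p) = insert (a, b) (path_edges (b # p))"
  by (simp_all add: path_edges_eq_set_zip)

lemma finite_path_edges [simp]: "finite (path_edges p)"
  by (simp add: path_edges_eq_set_zip)

lemma path_weight_Nil [simp]: "path_weight w [] = 0"
  and path_weight_singleton [simp]: "path_weight w [a] = 0"
  and path_weight_Cons_Cons [simp]: "path_weight w (a # b # p) = w (a, b) + path_weight w (b # p)"
  unfolding path_weight_def by (simp_all add: sum.lessThan_Suc_shift del: sum.lessThan_Suc)

lemma path_edges_append:
  "path_edges (p @ v # q) = path_edges (p @ [v]) \<union> path_edges (v # q)"
  by (induction p rule: induct_list012) auto

lemma path_weight_append:
  "path_weight w (p @ v # q) = path_weight w (p @ [v]) + path_weight w (v # q)"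
  by (induction p rule: induct_list012) auto

lemma path_edges_subset: "path_edges p \<subseteq> set p \<times> set p"
  by (induction p rule: induct_list012) auto

lemma path_edges_snoc_fst: "(a, b) \<in> path_edges (p @ [v]) \<Longrightarrow> a \<in> set p"
  by (induction p rule: induct_list012) auto

lemma mem_path_edges_iff: "(a, b) \<in> path_edges p \<longleftrightarrow> (\<exists>p1 p2. p = p1 @ a # b # p2)"
  by (induction p rule: induct_list012) (auto simp: Cons_eq_append_conv)

lemma path_weight_eq_sum_path_edges:
  "distinct p \<Longrightarrow> path_weight w p = sum w (path_edges p)"
proof (induction p rule: induct_list012)
  case (3 a b p)
  then have "(a, b) \<notin> path_edges (b # p)" using path_edges_subset by fastforce
  with 3 show ?case by simp
qed auto

lemma is_path_iff:
  "is_path E p u v \<longleftrightarrow> p \<noteq> [] \<and> hd p = u \<and> last p = v \<and> distinct p \<and> path_edges p \<subseteq> E"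
  unfolding is_path_def path_edges_def by blast

lemma is_path_appendD:
  assumes "is_path E (p @ v # q) u x"
  shows "is_path E (p @ [v]) u v" "is_path E (v # q) v x"
  using assms path_edges_append[of p v q] unfolding is_path_iff by (cases p; auto)+

lemma is_path_same_ends: "is_path E p u u \<Longrightarrow> p = [u]"
  unfolding is_path_iff
  by (metis distinct.simps(2) hd_Cons_tl last_in_set last_tl)

lemma is_path_snocE:
  assumes "is_path E p u v" "u \<noteq> v"
  obtains p' where "p = p' @ [v]" "p' \<noteq> []"
proof -
  obtain p' where "p = p' @ [v]"
    using assms(1) unfolding is_path_iff by (metis append_butlast_last_id)
  moreover have "p' \<noteq> []" using assms calculation unfolding is_path_iff by auto
  ultimately show thesis by (rule that)
qed

lemma path_edges_snoc: "p \<noteq> [] \<Longrightarrow> path_edges (p @ [v]) = insert (last p, v) (path_edges p)"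
  by (induction p rule: induct_list012) auto

lemma scss_cost_nonneg:
  assumes "\<forall>e\<in>E. w e \<ge> 0"
  shows "scss_cost E w k F B \<ge> 0"
  unfolding scss_cost_def using assms by (intro sum_nonneg) auto

lemma scss_cost_mono_backward:
  assumes "\<forall>e\<in>E. w e \<ge> 0" and "path_edges B' \<subseteq> path_edges B"
  shows "scss_cost E w k F B' \<le> scss_cost E w k F B"
  unfolding scss_cost_def using assms by (intro sum_mono mult_left_mono) auto

lemma scss_cost_remove_backward_edge:
  assumes "finite E" "e \<in> E" "path_edges B = insert e (path_edges B')" "e \<notin> path_edges B'"
    and "\<forall>i\<in>{1..k}. e \<notin> path_edges (F i)"
  shows "scss_cost E w k F B = scss_cost E w k F B' + w e"
proof -
  have "scss_cost E w k F B = scss_cost E w k F B' + (\<Sum>x\<in>E. if x = e then w x else 0)"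
    unfolding scss_cost_def sum.distrib[symmetric] using assms(3-5) by (intro sum.cong) auto
  then show ?thesis using assms(1,2) by simp
qed

lemma scss_cost_remove_forward_prefix:
  assumes "finite E" "j \<in> {1..k}" "F j = p @ v # q" "distinct (F j)" "path_edges (F j) \<subseteq> E"
    and "path_edges (p @ [v]) \<inter> path_edges B = {}"
  shows "scss_cost E w k F B = scss_cost E w k (F(j := v # q)) B + path_weight w (p @ [v])"
proof -
  define P where "P = path_edges (p @ [v])"
  let ?F' = "F(j := v # q)"
  let ?uses = "\<lambda>F x. {i\<in>{1..k}. x \<in> path_edges (F i)}"
  have edges_Fj: "path_edges (F j) = P \<union> path_edges (v # q)"
    unfolding P_def assms(3) by (rule path_edges_append)
  have disjoint: "P \<inter> path_edges (v # q) = {}"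
    using assms(3,4) path_edges_subset[of "v # q"] unfolding P_def
    by (auto dest: path_edges_snoc_fst)
  have card_uses: "card (?uses F x) = card (?uses ?F' x) + (if x \<in> P then 1 else 0)" for x
  proof (cases "x \<in> P")
    case True
    then have "?uses F x = insert j (?uses ?F' x)" "j \<notin> ?uses ?F' x"
      using edges_Fj disjoint assms(2) by auto
    then show ?thesis using True by simp
  next
    case False
    then have "?uses F x = ?uses ?F' x" using edges_Fj by auto
    then show ?thesis using False by simp
  qed
  have "scss_cost E w k F B = scss_cost E w k ?F' B + (\<Sum>x\<in>E. if x \<in> P then w x else 0)"
    unfolding scss_cost_def sum.distrib[symmetric] card_uses
    using assms(6) unfolding P_def by (intro sum.cong) (auto simp: algebra_simps)
  also have "(\<Sum>x\<in>E. if x \<in> P then w x else 0) = sum w P"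
    using assms(1,5) edges_Fj by (simp add: sum.If_cases Int_absorb1)
  also have "sum w P = path_weight w (p @ [v])"
    unfolding P_def using assms(3,4) by (simp add: path_weight_eq_sum_path_edges)
  finally show ?thesis .
qed

lemma scss_cost_truncate:
  assumes "finite E" "\<forall>e\<in>E. w e \<ge> 0"
    and "j \<in> {1..k}" "F j = p @ v # q" "distinct (F j)" "path_edges (F j) \<subseteq> E"
    and "path_edges B' \<subseteq> path_edges B" "path_edges (p @ [v]) \<inter> path_edges B' = {}"
  shows "scss_cost E w k (F(j := v # q)) B' + path_weight w (p @ [v]) \<le> scss_cost E w k F B"
  using scss_cost_remove_forward_prefix[where w = w and F = F, OF assms(1,3-6,8)]
    scss_cost_mono_backward[where k = k and F = F, OF assms(2,7)] by simp

lemma token_reach_trans: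
  "token_reach E w k x y c \<Longrightarrow> token_reach E w k y z d \<Longrightarrow> token_reach E w k x z (c + d)"
proof (induction arbitrary: z d rule: token_reach.induct)
  case (step x y c z' d')
  then show ?case by (metis token_reach.step add.assoc)
qed simp

lemma token_move_reach: "token_move E w k x y c \<Longrightarrow> token_reach E w k x y c"
  using token_reach.step[OF _ token_reach.refl] by fastforce

lemma token_reach_forward_path:
  assumes "j \<in> {1..k}" "j < length xs" "p \<noteq> []" "hd p = xs ! j" "path_edges p \<subseteq> E"
  shows "token_reach E w k xs (xs[j := last p]) (ereal (path_weight w p))"
  using assms(3-5) assms(2)
proof (induction p arbitrary: xs rule: induct_list012)
  case (2 a)
  then show ?case using token_reach.refl[of E w k xs] by (simp add: zero_ereal_def)
next
  case (3 a b p)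
  have "token_move E w k xs (xs[j := b]) (ereal (w (a, b)))"
    using token_move.forward[OF assms(1), of xs b] 3 by simp
  moreover have "token_reach E w k (xs[j := b]) (xs[j := last (b # p)]) (ereal (path_weight w (b # p)))"
    using "3.IH"(2)[of "xs[j := b]"] 3 by simp
  ultimately have "token_reach E w k xs (xs[j := last (b # p)]) (ereal (w (a, b)) + ereal (path_weight w (b # p)))"
    by (metis token_move_reach token_reach_trans)
  then show ?case by simp
qed simp

lemma token_reach_forward_then_flip:
  assumes "j \<in> {1..k}" "j < length xs" "p \<noteq> []" "hd p = xs ! j" "path_edges p \<subseteq> E"
  shows "token_reach E w k xs (xs[0 := last p, j := xs ! 0])
    (ereal (path_weight w p) + sp_dist E w (last p) (xs ! 0))"
proof -
  have "token_move E w k (xs[j := last p]) (xs[0 := last p, j := xs ! 0]) (sp_dist E w (last p) (xs ! 0))"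
    using token_move.flip[OF assms(1), where x = "xs[j := last p]"] assms(1,2)
    by (simp add: list_update_swap)
  with token_reach_forward_path[OF assms] show ?thesis
    by (blast intro: token_reach_trans token_move_reach)
qed

lemma sp_dist_le_path_weight: "is_path E p u v \<Longrightarrow> sp_dist E w u v \<le> ereal (path_weight w p)"
  unfolding sp_dist_def by (intro INF_lower) simp

text \<open>Token \<open>b\<close> has still to walk \<open>B\<close> backwards, from its position \<open>xs ! 0\<close> to \<open>t\<close>; token \<open>f\<^sub>i\<close>
  has still to walk \<open>F i\<close>.\<close>

definition tokens_on_paths ::
    "('a \<times> 'a) set \<Rightarrow> nat \<Rightarrow> 'a \<Rightarrow> 'a list \<Rightarrow> 'a list \<Rightarrow> (nat \<Rightarrow> 'a list) \<Rightarrow> bool" where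
  "tokens_on_paths E k t xs B F \<longleftrightarrow>
     length xs = Suc k \<and> is_path E B t (xs ! 0) \<and> (\<forall>i\<in>{1..k}. is_path E (F i) (xs ! i) t)"

definition paths_size :: "nat \<Rightarrow> 'a list \<Rightarrow> (nat \<Rightarrow> 'a list) \<Rightarrow> nat" where
  "paths_size k B F = length B + (\<Sum>i\<in>{1..k}. length (F i))"

definition affordable_step ::
    "('a \<times> 'a) set \<Rightarrow> ('a \<times> 'a \<Rightarrow> real) \<Rightarrow> nat \<Rightarrow> 'a \<Rightarrow>
     'a list \<Rightarrow> 'a list \<Rightarrow> (nat \<Rightarrow> 'a list) \<Rightarrow> 'a list \<Rightarrow> 'a list \<Rightarrow> (nat \<Rightarrow> 'a list) \<Rightarrow> bool" where
  "affordable_step E w k t xs B F xs' B' F' \<longleftrightarrow>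
     tokens_on_paths E k t xs' B' F' \<and> paths_size k B' F' < paths_size k B F \<and>
     (\<exists>c. token_reach E w k xs xs' c \<and> c + ereal (scss_cost E w k F' B') \<le> ereal (scss_cost E w k F B))"

lemma affordable_step_forward:
  assumes "finite E" "tokens_on_paths E k t xs B F" "xs ! 0 = t" "j \<in> {1..k}" "xs ! j \<noteq> t"
  shows "\<exists>xs' B' F'. affordable_step E w k t xs B F xs' B' F'"
proof -
  have B: "B = [t]" and Fj: "is_path E (F j) (xs ! j) t" and j: "j < length xs" "j \<noteq> 0"
    using assms(2-4) is_path_same_ends unfolding tokens_on_paths_def by fastforce+
  then obtain b q where Fj_eq: "F j = [xs ! j] @ b # q"
    using assms(5) unfolding is_path_iff by (cases "F j"; cases "tl (F j)") auto
  let ?xs' = "xs[j := b]" and ?F' = "F(j := b # q)"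
  have "tokens_on_paths E k t ?xs' B ?F'"
    using assms(2) j Fj is_path_appendD(2)[OF Fj[unfolded Fj_eq]]
    unfolding tokens_on_paths_def by auto
  moreover have "paths_size k B ?F' < paths_size k B F"
    unfolding paths_size_def using assms(4) Fj_eq by (auto intro!: sum_strict_mono_ex1)
  moreover have "token_reach E w k xs ?xs' (ereal (w (xs ! j, b)))"
    using token_move.forward[OF assms(4), of xs b] Fj Fj_eq j
    by (auto simp: is_path_iff intro: token_move_reach)
  moreover have "scss_cost E w k F B = scss_cost E w k ?F' B + w (xs ! j, b)"
    using scss_cost_remove_forward_prefix[where F = F, OF assms(1,4) Fj_eq] Fj B by (simp add: is_path_iff)
  ultimately show ?thesis unfolding affordable_step_def by force
qed

lemma tokens_on_paths_backward_path:
  assumes "tokens_on_paths E k t xs (B @ [x]) F" "B \<noteq> []"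
  shows "xs ! 0 = x" "is_path E B t (last B)" "(last B, x) \<in> E" "x \<notin> set B"
    "path_edges (B @ [x]) = insert (last B, x) (path_edges B)" "(last B, x) \<notin> path_edges B"
proof -
  have path: "is_path E (B @ [x]) t (xs ! 0)" using assms(1) unfolding tokens_on_paths_def by simp
  show edges: "path_edges (B @ [x]) = insert (last B, x) (path_edges B)"
    using assms(2) by (rule path_edges_snoc)
  show "xs ! 0 = x" "is_path E B t (last B)" "(last B, x) \<in> E" "x \<notin> set B"
    using path assms(2) unfolding is_path_iff edges by auto
  then show "(last B, x) \<notin> path_edges B" using path_edges_subset by blast
qed

lemma affordable_step_backward:
  assumes "finite E" "tokens_on_paths E k t xs (B @ [x]) F" "B \<noteq> []"
    and "\<forall>i\<in>{1..k}. (last B, x) \<notin> path_edges (F i)"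
  shows "\<exists>xs' B' F'. affordable_step E w k t xs (B @ [x]) F xs' B' F'"
proof -
  note B = tokens_on_paths_backward_path[OF assms(2,3)]
  let ?xs' = "xs[0 := last B]"
  have "tokens_on_paths E k t ?xs' B F"
    using assms(2) B(2) unfolding tokens_on_paths_def by auto
  moreover have "paths_size k B F < paths_size k (B @ [x]) F"
    unfolding paths_size_def by simp
  moreover have "token_reach E w k xs ?xs' (ereal (w (last B, x)))"
    using token_move.backward[of "last B" xs E w k] B(1,3) by (simp add: token_move_reach)
  moreover have "scss_cost E w k F (B @ [x]) = scss_cost E w k F B + w (last B, x)"
    using scss_cost_remove_backward_edge[OF assms(1) B(3,5,6) assms(4)] .
  ultimately show ?thesis unfolding affordable_step_def by force
qed

lemma split_at_first_common_vertex:
  assumes "set B \<inter> set P \<noteq> {}"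
  obtains B1 v B2 P1 P2 where "B = B1 @ v # B2" "P = P1 @ v # P2" "set B1 \<inter> set P = {}"
proof -
  obtain B1 v B2 where "B = B1 @ v # B2" "v \<in> set P" "\<forall>y\<in>set B1. y \<notin> set P"
    using split_list_first_prop[of B "\<lambda>y. y \<in> set P"] assms by blast
  then show thesis using that by (blast dest: split_list)
qed

lemma affordable_step_flip:
  assumes "finite E" "\<forall>e\<in>E. w e \<ge> 0"
    and "tokens_on_paths E k t xs (B @ [x]) F" "B \<noteq> []"
    and "j \<in> {1..k}" "(last B, x) \<in> path_edges (F j)"
  shows "\<exists>xs' B' F'. affordable_step E w k t xs (B @ [x]) F xs' B' F'"
proof -
  note Bx = tokens_on_paths_backward_path[OF assms(3,4)]
  have Fj: "is_path E (F j) (xs ! j) t" and j: "j < length xs" "j \<noteq> 0"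
    using assms(3,5) unfolding tokens_on_paths_def by auto
  obtain r1 r2 where Fj_eq: "F j = (r1 @ [last B]) @ x # r2"
    using assms(6) unfolding mem_path_edges_iff by auto
  have "set B \<inter> set (r1 @ [last B]) \<noteq> {}" using assms(4) by simp
  then obtain B1 v B2 a1 a2 where B_eq: "B = B1 @ v # B2" and r1_eq: "r1 @ [last B] = a1 @ v # a2"
    and B1_r1: "set B1 \<inter> set (r1 @ [last B]) = {}"
    by (rule split_at_first_common_vertex)
  have "x \<notin> set B1" using Bx(4) unfolding B_eq by simp
  with B1_r1 have B1_disjoint: "set B1 \<inter> set (r1 @ [last B, x]) = {}" by auto
  have "is_path E (a1 @ v # (a2 @ x # r2)) (xs ! j) t" using Fj Fj_eq r1_eq by simp
  then have prefix: "is_path E (a1 @ [v]) (xs ! j) v" and detour: "is_path E (v # a2 @ [x]) v x"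
    using is_path_appendD(1)[of E "v # a2" x r2 v t] by (auto dest: is_path_appendD)
  let ?xs' = "xs[0 := v, j := x]" and ?B' = "B1 @ [v]" and ?F' = "F(j := x # r2)"
  have "tokens_on_paths E k t ?xs' ?B' ?F'"
    using assms(3) is_path_appendD(1)[OF Bx(2)[unfolded B_eq]] is_path_appendD(2)[OF Fj[unfolded Fj_eq]] j
    unfolding tokens_on_paths_def by auto
  moreover have "paths_size k ?B' ?F' < paths_size k (B @ [x]) F"
  proof -
    have "(\<Sum>i\<in>{1..k}. length (?F' i)) \<le> (\<Sum>i\<in>{1..k}. length (F i))"
      using Fj_eq by (intro sum_mono) auto
    then show ?thesis unfolding paths_size_def B_eq by simp
  qed
  moreover have "token_reach E w k xs ?xs' (ereal (path_weight w (a1 @ [v])) + sp_dist E w v x)"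
    using token_reach_forward_then_flip[OF assms(5) j(1), of "a1 @ [v]"] prefix Bx(1)
    by (simp add: is_path_iff)
  moreover have "ereal (path_weight w (a1 @ [v])) + sp_dist E w v x + ereal (scss_cost E w k ?F' ?B')
      \<le> ereal (scss_cost E w k F (B @ [x]))"
  proof -
    have disjoint: "path_edges ((r1 @ [last B]) @ [x]) \<inter> path_edges ?B' = {}"
      using B1_disjoint path_edges_subset[of "r1 @ [last B, x]"] by (force dest: path_edges_snoc_fst)
    have "B @ [x] = B1 @ v # (B2 @ [x])" using B_eq by simp
    then have B'_sub: "path_edges ?B' \<subseteq> path_edges (B @ [x])"
      using path_edges_append[of B1 v "B2 @ [x]"] by simp
    have "distinct (F j)" "path_edges (F j) \<subseteq> E" using Fj by (simp_all add: is_path_iff)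
    then have "scss_cost E w k ?F' ?B' + path_weight w ((r1 @ [last B]) @ [x]) \<le> scss_cost E w k F (B @ [x])"
      by (rule scss_cost_truncate[where F = F, OF assms(1,2,5) Fj_eq _ _ B'_sub disjoint])
    moreover have "path_weight w (r1 @ [last B, x]) = path_weight w (a1 @ [v]) + path_weight w (v # a2 @ [x])"
      using r1_eq path_weight_append[of w a1 v "a2 @ [x]"] by (metis append_Cons append_assoc append_Nil)
    ultimately have cost: "path_weight w (a1 @ [v]) + path_weight w (v # a2 @ [x]) + scss_cost E w k ?F' ?B'
        \<le> scss_cost E w k F (B @ [x])" by simp
    have "sp_dist E w v x \<le> ereal (path_weight w (v # a2 @ [x]))"
      using detour by (rule sp_dist_le_path_weight)
    then have "ereal (path_weight w (a1 @ [v])) + sp_dist E w v x + ereal (scss_cost E w k ?F' ?B')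
        \<le> ereal (path_weight w (a1 @ [v])) + ereal (path_weight w (v # a2 @ [x])) + ereal (scss_cost E w k ?F' ?B')"
      by (intro add_mono order.refl)
    also have "\<dots> \<le> ereal (scss_cost E w k F (B @ [x]))"
      using cost by simp
    finally show ?thesis .
  qed
  ultimately show ?thesis unfolding affordable_step_def by blast
qed

lemma affordable_step_exists:
  assumes "finite E" "\<forall>e\<in>E. w e \<ge> 0"
    and "tokens_on_paths E k t xs B F" "xs \<noteq> replicate (Suc k) t"
  shows "\<exists>xs' B' F'. affordable_step E w k t xs B F xs' B' F'"
proof (cases "xs ! 0 = t")
  case True
  have "\<exists>j\<in>{1..k}. xs ! j \<noteq> t"
  proof (rule ccontr)
    assume "\<not> ?thesis"
    then have "xs = replicate (Suc k) t"
      using True assms(3) unfolding tokens_on_paths_def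
      by (intro nth_equalityI) (auto simp: nth_Cons' less_Suc_eq_0_disj)
    with assms(4) show False ..
  qed
  with affordable_step_forward[OF assms(1,3) True] show ?thesis by blast
next
  case False
  with assms(3) obtain B' where B: "B = B' @ [xs ! 0]" "B' \<noteq> []"
    unfolding tokens_on_paths_def by (blast elim: is_path_snocE)
  show ?thesis
  proof (cases "\<exists>j\<in>{1..k}. (last B', xs ! 0) \<in> path_edges (F j)")
    case True
    then show ?thesis
      using affordable_step_flip[OF assms(1,2) assms(3)[unfolded B] B(2)] B(1) by blast
  next
    case False
    then show ?thesis
      using affordable_step_backward[OF assms(1) assms(3)[unfolded B] B(2)] B(1) by blast
  qed
qed

lemma token_reach_within_scss_cost:
  assumes "finite E" "\<forall>e\<in>E. w e \<ge> 0" "tokens_on_paths E k t xs B F"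
  shows "\<exists>c. token_reach E w k xs (replicate (Suc k) t) c \<and> c \<le> ereal (scss_cost E w k F B)"
  using assms(3)
proof (induction "paths_size k B F" arbitrary: xs B F rule: less_induct)
  case less
  show ?case
  proof (cases "xs = replicate (Suc k) t")
    case True
    then show ?thesis
      using token_reach.refl scss_cost_nonneg[OF assms(2)] by (metis zero_ereal_def ereal_less_eq(3))
  next
    case False
    then obtain xs' B' F' c where step: "tokens_on_paths E k t xs' B' F'"
        "paths_size k B' F' < paths_size k B F" "token_reach E w k xs xs' c"
        "c + ereal (scss_cost E w k F' B') \<le> ereal (scss_cost E w k F B)"
      using affordable_step_exists[OF assms(1,2) less.prems] unfolding affordable_step_def by blast
    obtain d where "token_reach E w k xs' (replicate (Suc k) t) d" "d \<le> ereal (scss_cost E w k F' B')"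
      using less.hyps[OF step(2,1)] by blast
    moreover have "c + d \<le> ereal (scss_cost E w k F B)"
      using add_left_mono[OF calculation(2), of c] step(4) by (rule order.trans)
    ultimately show ?thesis using token_reach_trans[OF step(3)] by blast
  qed
qed

theorem lemma6:
  fixes V :: "'a set" and E :: "('a \<times> 'a) set" and w :: "'a \<times> 'a \<Rightarrow> real"
    and k :: nat and s t :: 'a
  assumes "finite V" and "E \<subseteq> V \<times> V"
    and "\<And>e. e \<in> E \<Longrightarrow> w e \<ge> 0"
    and "s \<in> V" and "t \<in> V"
  shows "OPT_scss V E w k s t \<ge> OPT_token V E w k s t"
  unfolding OPT_scss_def
proof (rule INF_greatest, clarify)
  fix F B assume "scss_feasible E k s t F B"
  then have start: "tokens_on_paths E k t (replicate (Suc k) s) B F"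
    unfolding scss_feasible_def tokens_on_paths_def by auto
  have "finite E" using assms(1,2) finite_subset by blast
  moreover have "\<forall>e\<in>E. w e \<ge> 0" using assms(3) by blast
  ultimately obtain c where reach: "token_reach E w k (replicate (Suc k) s) (replicate (Suc k) t) c"
      and "c \<le> ereal (scss_cost E w k F B)"
    using token_reach_within_scss_cost[OF _ _ start] by blast
  moreover have "OPT_token V E w k s t \<le> c"
    unfolding OPT_token_def by (rule INF_lower) (use reach in simp)
  ultimately show "OPT_token V E w k s t \<le> ereal (scss_cost E w k (fst (F, B)) (snd (F, B)))"
    by simp
qed

end
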